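(* For every $n\ge 1$, the linear complexity of $(r_0,r_1,\ldots,r_{n-1})$ over $\mathrm{GF}(2)$ equals $\lfloor (n+1)/2\rfloor$; equivalently, the sequence $(r_0,r_1,\ldots)$ has a perfect linear complexity profile.
   Context: $(r_0,r_1,\ldots)$ is the binary sequence with $r_i=1$ if $i=2^j-1$ for some $j\ge 0$ and $r_i=0$ otherwise. A monic $c\in\mathrm{GF}(2)[x]$ of degree $l$ is a characteristic polynomial of $(s_0,\ldots,s_{n-1})$ if either $l\ge n$ or $c_ls_{k+l}+\cdots+c_0s_k=0$ for all $0\le k\le n-l-1$; the linear complexity of $(s_0,\ldots,s_{n-1})$ is the minimal degree of a characteristic polynomial. *)

theory Defs
  imports "HOL-Computational_Algebra.Polynomial" "HOL-Library.Z2"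
begin

definition r_seq :: "nat \<Rightarrow> bit" where
  "r_seq i = (if \<exists>j. i = 2 ^ j - 1 then 1 else 0)"

definition is_char_poly :: "'a::field poly \<Rightarrow> (nat \<Rightarrow> 'a) \<Rightarrow> nat \<Rightarrow> bool" where
  "is_char_poly c s n \<longleftrightarrow>
     lead_coeff c = 1 \<and>
     (degree c \<ge> n \<or>
      (\<forall>k. k + degree c + 1 \<le> n \<longrightarrow> (\<Sum>i\<le>degree c. coeff c i * s (k + i)) = 0))"

definition linear_complexity :: "(nat \<Rightarrow> 'a::field) \<Rightarrow> nat \<Rightarrow> nat" where
  "linear_complexity s n = (LEAST l. \<exists>c. is_char_poly c s n \<and> degree c = l)"

end

theory Submission
  imports Defs
begin

text \<open>
  The sequence satisfies r(0) = 1, r(2j+2) = 0 and r(2j+1) = r(j), so the discrepancies of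
  p(x^2) + x q(x^2) at positions 2a and 2a+1 reduce to those of q and p at position a. By
  recursion on m this yields a monic polynomial P_m of degree m that generates the first 2m terms
  but not the first 2m+1, together with a companion F_m of degree m-1 whose discrepancies are 1 at
  positions 0 and m and vanish in between:
  P_2t = P_t(x^2) + x F_t(x^2), F_2t = x F_t(x^2), P_2t+1 = P_t(x^2) + x F_t+1(x^2), F_2t+1 = P_t(x^2).
  P_m with m = ceil(n/2) gives the upper bound. For the lower bound, Massey's lemma applied to P_m
  shows that a characteristic polynomial of the first 2m+1 terms has degree at least m+1.
\<close>

lemma r_seq_iff_Suc_power: "r_seq i = (if \<exists>k. Suc i = 2 ^ k then 1 else 0)"
proof -
  have "i = 2 ^ k - 1 \<longleftrightarrow> Suc i = 2 ^ k" for k :: nat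
    using one_le_power[of "2::nat" k] by linarith
  then show ?thesis
    unfolding r_seq_def by simp
qed

lemma r_seq_double: "r_seq (2 * i) = (if i = 0 then 1 else 0)"
proof -
  have "Suc (2 * i) = 2 ^ k \<longleftrightarrow> i = 0 \<and> k = 0" for k :: nat
    by (cases k) (auto, presburger)
  then show ?thesis
    unfolding r_seq_iff_Suc_power by auto
qed

lemma r_seq_Suc_double: "r_seq (Suc (2 * i)) = r_seq i"
proof -
  have "(\<exists>k. Suc (Suc (2 * i)) = 2 ^ k) \<longleftrightarrow> (\<exists>k. Suc i = 2 ^ k)"
  proof
    assume "\<exists>k. Suc (Suc (2 * i)) = 2 ^ k"
    then obtain k where k: "2 * Suc i = 2 ^ k"
      by auto
    then have "Suc i = 2 ^ (k - 1)"
      by (cases k) simp_all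
    then show "\<exists>k. Suc i = 2 ^ k" ..
  next
    assume "\<exists>k. Suc i = 2 ^ k"
    then obtain k where "Suc i = 2 ^ k" ..
    then have "Suc (Suc (2 * i)) = 2 ^ Suc k"
      by simp
    then show "\<exists>k. Suc (Suc (2 * i)) = 2 ^ k" ..
  qed
  then show ?thesis
    unfolding r_seq_iff_Suc_power by simp
qed

definition discrepancy :: "(nat \<Rightarrow> 'a::comm_semiring_0) \<Rightarrow> 'a poly \<Rightarrow> nat \<Rightarrow> 'a" where
  "discrepancy s c k = (\<Sum>i\<le>degree c. coeff c i * s (k + i))"

lemma discrepancy_0 [simp]: "discrepancy s 0 k = 0"
  by (simp add: discrepancy_def)

lemma discrepancy_1 [simp]: "discrepancy s 1 k = s k"
  by (simp add: discrepancy_def)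

lemma discrepancy_eq_sum_lessThan:
  assumes "degree c < n"
  shows "discrepancy s c k = (\<Sum>i<n. coeff c i * s (k + i))"
  unfolding discrepancy_def
  by (rule sum.mono_neutral_left) (use assms in \<open>auto simp: coeff_eq_0 not_le\<close>)

lemma is_char_poly_iff_discrepancy:
  "is_char_poly c s n \<longleftrightarrow>
     lead_coeff c = 1 \<and> (degree c \<ge> n \<or> (\<forall>k. k + degree c + 1 \<le> n \<longrightarrow> discrepancy s c k = 0))"
  by (simp add: is_char_poly_def discrepancy_def)

lemma is_char_poly_mono: "is_char_poly c s n \<Longrightarrow> m \<le> n \<Longrightarrow> is_char_poly c s m"
  unfolding is_char_poly_def by auto

text \<open>interleave p q = p(x^2) + x q(x^2)\<close>

definition interleave :: "'a::zero poly \<Rightarrow> 'a poly \<Rightarrow> 'a poly" where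
  "interleave p q = Abs_poly (\<lambda>i. if even i then coeff p (i div 2) else coeff q (i div 2))"

lemma coeff_interleave:
  "coeff (interleave p q) i = (if even i then coeff p (i div 2) else coeff q (i div 2))"
proof -
  have "\<forall>\<^sub>\<infinity> i. (if even i then coeff p (i div 2) else coeff q (i div 2)) = 0"
    unfolding MOST_nat
    by (rule exI[of _ "2 * (degree p + degree q) + 1"]) (auto intro!: coeff_eq_0)
  then show ?thesis
    by (simp add: interleave_def Abs_poly_inverse)
qed

lemma degree_interleave:
  "degree (interleave p q) = (if q = 0 then 2 * degree p else max (2 * degree p) (Suc (2 * degree q)))"
proof (rule antisym)
  show "degree (interleave p q) \<le> (if q = 0 then 2 * degree p else max (2 * degree p) (Suc (2 * degree q)))"
    by (rule degree_le) (auto simp: coeff_interleave intro!: coeff_eq_0 elim!: evenE oddE)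
  have "2 * degree p \<le> degree (interleave p q)"
    by (cases "p = 0") (auto intro!: le_degree simp: coeff_interleave)
  moreover have "Suc (2 * degree q) \<le> degree (interleave p q)" if "q \<noteq> 0"
    using that by (auto intro!: le_degree simp: coeff_interleave)
  ultimately show "(if q = 0 then 2 * degree p else max (2 * degree p) (Suc (2 * degree q))) \<le> degree (interleave p q)"
    by auto
qed

lemma sum_lessThan_double:
  fixes g :: "nat \<Rightarrow> 'a::comm_monoid_add"
  shows "(\<Sum>i<2 * n. g i) = (\<Sum>j<n. g (2 * j)) + (\<Sum>j<n. g (Suc (2 * j)))"
  by (induction n) (simp_all add: algebra_simps)

lemma discrepancy_interleave:
  assumes "degree p < n" "degree q < n"
  shows "discrepancy s (interleave p q) k =
    (\<Sum>j<n. coeff p j * s (k + 2 * j)) + (\<Sum>j<n. coeff q j * s (Suc (k + 2 * j)))"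
proof -
  have "degree (interleave p q) < 2 * n"
    using assms by (simp add: degree_interleave)
  then show ?thesis
    by (simp add: discrepancy_eq_sum_lessThan sum_lessThan_double coeff_interleave)
qed

lemma discrepancy_interleave_double:
  "discrepancy r_seq (interleave p q) (2 * a) = (if a = 0 then coeff p 0 else 0) + discrepancy r_seq q a"
proof -
  define n where "n = Suc (degree p + degree q)"
  have n: "degree p < n" "degree q < n"
    unfolding n_def by simp_all
  have "(\<Sum>j<n. coeff p j * r_seq (2 * a + 2 * j)) = (\<Sum>j<n. if j = 0 then (if a = 0 then coeff p 0 else 0) else 0)"
    using r_seq_double[of "a + _"] by (intro sum.cong) simp_all
  also have "\<dots> = (if a = 0 then coeff p 0 else 0)"
    using n sum.delta[of "{..<n}" 0 "\<lambda>_. if a = 0 then coeff p 0 else 0"] by simp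
  finally show ?thesis
    using n r_seq_Suc_double[of "a + _"]
    by (simp add: discrepancy_interleave discrepancy_eq_sum_lessThan)
qed

lemma discrepancy_interleave_Suc_double:
  "discrepancy r_seq (interleave p q) (Suc (2 * a)) = discrepancy r_seq p a"
proof -
  define n where "n = Suc (degree p + degree q)"
  have n: "degree p < n" "degree q < n"
    unfolding n_def by simp_all
  show ?thesis
    using n r_seq_double[of "Suc (a + _)"] r_seq_Suc_double[of "a + _"]
    by (simp add: discrepancy_interleave discrepancy_eq_sum_lessThan)
qed

definition profile_poly :: "nat \<Rightarrow> bit poly \<Rightarrow> bool" where
  "profile_poly m p \<longleftrightarrow> degree p = m \<and> lead_coeff p = 1 \<and> coeff p 0 = 1 \<and>
     (\<forall>j<m. discrepancy r_seq p j = 0) \<and> discrepancy r_seq p m = 1"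

definition companion_poly :: "nat \<Rightarrow> bit poly \<Rightarrow> bool" where
  "companion_poly m q \<longleftrightarrow> degree q = m - 1 \<and> discrepancy r_seq q 0 = 1 \<and>
     (\<forall>j\<in>{1..<m}. discrepancy r_seq q j = 0) \<and> discrepancy r_seq q m = 1"

lemma companion_poly_nonzero:
  assumes "companion_poly m q"
  shows "q \<noteq> 0" "lead_coeff q = 1"
proof -
  show "q \<noteq> 0"
    using assms by (auto simp: companion_poly_def)
  then show "lead_coeff q = 1"
    using bit_not_zero_iff leading_coeff_neq_0 by blast
qed

lemma profile_poly_double:
  assumes "1 \<le> t" "profile_poly t p" "companion_poly t q"
  shows "profile_poly (2 * t) (interleave p q)"
proof -
  have "discrepancy r_seq (interleave p q) j = 0" if "j < 2 * t" for j
    using that assms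
    by (cases "even j")
       (auto elim!: evenE oddE simp: discrepancy_interleave_double discrepancy_interleave_Suc_double
         profile_poly_def companion_poly_def)
  then show ?thesis
    using assms companion_poly_nonzero[OF assms(3)]
    by (auto simp: profile_poly_def companion_poly_def degree_interleave coeff_interleave
        discrepancy_interleave_double)
qed

lemma companion_poly_double:
  assumes "1 \<le> t" "companion_poly t q"
  shows "companion_poly (2 * t) (interleave 0 q)"
proof -
  have "discrepancy r_seq (interleave 0 q) j = 0" if "j \<in> {1..<2 * t}" for j
    using that assms
    by (cases "even j")
       (auto elim!: evenE oddE simp: discrepancy_interleave_double discrepancy_interleave_Suc_double
         companion_poly_def)
  then show ?thesis
    using assms companion_poly_nonzero[OF assms(2)] discrepancy_interleave_double[of 0 q 0]
    by (auto simp: companion_poly_def degree_interleave discrepancy_interleave_double)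
qed

lemma profile_poly_Suc_double:
  assumes "profile_poly t p" "companion_poly (Suc t) q"
  shows "profile_poly (Suc (2 * t)) (interleave p q)"
proof -
  have "discrepancy r_seq (interleave p q) j = 0" if "j < Suc (2 * t)" for j
    using that assms
    by (cases "even j")
       (auto elim!: evenE oddE simp: discrepancy_interleave_double discrepancy_interleave_Suc_double
         profile_poly_def companion_poly_def)
  then show ?thesis
    using assms companion_poly_nonzero[OF assms(2)]
    by (auto simp: profile_poly_def companion_poly_def degree_interleave coeff_interleave
        discrepancy_interleave_Suc_double)
qed

lemma companion_poly_Suc_double:
  assumes "profile_poly t p"
  shows "companion_poly (Suc (2 * t)) (interleave p 0)"
proof -
  have "discrepancy r_seq (interleave p 0) j = 0" if "j \<in> {1..<Suc (2 * t)}" for j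
    using that assms
    by (cases "even j")
       (auto elim!: evenE oddE simp: discrepancy_interleave_double discrepancy_interleave_Suc_double
         profile_poly_def)
  then show ?thesis
    using assms discrepancy_interleave_double[of p 0 0]
    by (auto simp: profile_poly_def companion_poly_def degree_interleave discrepancy_interleave_Suc_double)
qed

lemma profile_companion_poly_exist: "1 \<le> m \<Longrightarrow> \<exists>p q. profile_poly m p \<and> companion_poly m q"
proof (induction m rule: less_induct)
  case (less m)
  consider "m = 1" | t where "m = 2 * t" "1 \<le> t" | t where "m = Suc (2 * t)" "1 \<le> t"
    using less.prems by (cases "m div 2 = 0"; cases "even m") (auto elim!: evenE oddE)
  then show ?case
  proof cases
    case 1
    have "profile_poly 0 1"
      using r_seq_double[of 0] by (simp add: profile_poly_def)
    moreover have "companion_poly 1 1"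
      using r_seq_double[of 0] r_seq_Suc_double[of 0] by (simp add: companion_poly_def)
    ultimately show ?thesis
      using 1 profile_poly_Suc_double[of 0] by auto
  next
    case 2
    then obtain p q where "profile_poly t p" "companion_poly t q"
      using less.IH[of t] by auto
    then show ?thesis
      using 2 profile_poly_double companion_poly_double by blast
  next
    case 3
    then obtain p q where "profile_poly t p" "companion_poly (Suc t) q"
      using less.IH[of t] less.IH[of "Suc t"] by auto
    then show ?thesis
      using 3 profile_poly_Suc_double companion_poly_Suc_double by blast
  qed
qed

lemma profile_poly_exists: "\<exists>p. profile_poly m p"
proof (cases "m = 0")
  case True
  then have "profile_poly m 1"
    using r_seq_double[of 0] by (simp add: profile_poly_def)
  then show ?thesis ..
next
  case False
  then show ?thesis
    using profile_companion_poly_exist[of m] by auto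
qed

lemma profile_poly_is_char_poly:
  assumes "profile_poly m p" "n \<le> 2 * m"
  shows "is_char_poly p r_seq n"
  using assms by (auto simp: is_char_poly_iff_discrepancy profile_poly_def)

lemma profile_poly_not_char_poly:
  assumes "profile_poly m p"
  shows "\<not> is_char_poly p r_seq (Suc (2 * m))"
  using assms by (auto simp: is_char_poly_iff_discrepancy profile_poly_def)

lemma sum_coeff_discrepancy_swap:
  "(\<Sum>i\<le>degree c. coeff c i * discrepancy s d (k + i)) =
   (\<Sum>j\<le>degree d. coeff d j * discrepancy s c (k + j))"
  unfolding discrepancy_def sum_distrib_left
  by (subst sum.swap) (simp add: algebra_simps)

lemma is_char_poly_degree_add_ge:
  fixes c d :: "'a::field poly"
  assumes c: "is_char_poly c s N" and c_fails: "\<not> is_char_poly c s (Suc N)"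
    and d: "is_char_poly d s (Suc N)"
  shows "Suc N \<le> degree c + degree d"
proof (rule ccontr)
  txt \<open>Sum c_i d_j s(M+i+j) with M = N - deg c - deg d in both orders: grouped by i it is a
    combination of discrepancies of d, all zero; grouped by j only j = deg d survives, and that
    term is the nonzero discrepancy of c at N - deg c.\<close>
  assume "\<not> ?thesis"
  then have deg: "degree c + degree d \<le> N"
    by simp
  have c_zero: "discrepancy s c k = 0" if "k + degree c < N" for k
    using c that deg by (auto simp: is_char_poly_iff_discrepancy)
  obtain k where k: "k + degree c \<le> N" "discrepancy s c k \<noteq> 0"
    using c c_fails deg by (auto simp: is_char_poly_iff_discrepancy)
  then have "k = N - degree c"
    using c_zero by (metis le_neq_implies_less le_add_diff_inverse2 add_diff_cancel_right')
  with k have c_nonzero: "discrepancy s c (N - degree c) \<noteq> 0"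
    by simp
  have d_zero: "discrepancy s d k = 0" if "k + degree d \<le> N" for k
    using d that deg by (auto simp: is_char_poly_iff_discrepancy)
  define M where "M = N - degree c - degree d"
  have "(\<Sum>i\<le>degree c. coeff c i * discrepancy s d (M + i)) = 0"
    using deg by (intro sum.neutral) (auto simp: M_def d_zero)
  moreover have "(\<Sum>j\<le>degree d. coeff d j * discrepancy s c (M + j)) =
      (\<Sum>j\<le>degree d. if j = degree d then discrepancy s c (N - degree c) else 0)"
  proof (intro sum.cong refl)
    fix j
    assume "j \<in> {..degree d}"
    moreover have "lead_coeff d = 1"
      using d by (simp add: is_char_poly_def)
    ultimately show "coeff d j * discrepancy s c (M + j) =
        (if j = degree d then discrepancy s c (N - degree c) else 0)"
      using deg by (auto simp: M_def c_zero)
  qed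
  ultimately show False
    using c_nonzero by (simp add: sum_coeff_discrepancy_swap)
qed

lemma char_poly_r_seq_degree_gt:
  assumes "is_char_poly d r_seq n" "2 * m < n"
  shows "m < degree d"
proof -
  obtain p where p: "profile_poly m p"
    using profile_poly_exists ..
  have "Suc (2 * m) \<le> degree p + degree d"
    using is_char_poly_degree_add_ge[OF profile_poly_is_char_poly[OF p order.refl]
        profile_poly_not_char_poly[OF p] is_char_poly_mono[OF assms(1)]] assms(2) by simp
  then show ?thesis
    using p by (simp add: profile_poly_def)
qed

lemma linear_complexity_eqI:
  assumes "is_char_poly c s n" "\<And>d. is_char_poly d s n \<Longrightarrow> degree c \<le> degree d"
  shows "linear_complexity s n = degree c"
  unfolding linear_complexity_def using assms by (intro Least_equality) auto

theorem corollary4: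
  fixes n :: nat
  assumes "n \<ge> 1"
  shows "linear_complexity r_seq n = (n + 1) div 2"
proof -
  obtain p where p: "profile_poly ((n + 1) div 2) p"
    using profile_poly_exists ..
  have "is_char_poly p r_seq n"
    using p by (rule profile_poly_is_char_poly) simp
  moreover have "(n + 1) div 2 \<le> degree d" if "is_char_poly d r_seq n" for d
  proof -
    have "2 * ((n - 1) div 2) < n" "(n + 1) div 2 = Suc ((n - 1) div 2)"
      using assms by presburger+
    then show ?thesis
      using char_poly_r_seq_degree_gt[OF that] by (simp add: Suc_le_eq)
  qed
  ultimately show ?thesis
    using p by (simp add: linear_complexity_eqI profile_poly_def)
qed

end
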